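(* (a) $\mathsf{SP_{tot}P}=\mathsf{SPP}$, (b) $\mathsf{WP_{tot}P}=\mathsf{WPP}$, (c) $\mathsf{{C_=}_{tot}P}=\mathsf{C_=P}$, and (d) $\mathsf{P_{tot}P}=\mathsf{PP}$.
   Context: An NPTM is a non-deterministic polynomial-time Turing machine. For an NPTM $M$ and input $x$, $acc_M(x)$, $rej_M(x)$ are the numbers of accepting and rejecting paths of $M$ on $x$, and $tot_M(x)$ is the number of all computation paths of $M$ on $x$ minus $1$. $\mathsf{TotP}=\{tot_M\}$, $\mathsf{GapP}=\{acc_M-rej_M\}$ over all NPTMs $M$; $\mathsf{Gap_{tot}P}$ is the class of differences $g-h$ with $g,h\in\mathsf{TotP}$; $\mathsf{FP}$ is the class of polynomial-time computable functions. For a function class $\mathcal{F}\in\{\mathsf{GapP},\mathsf{Gap_{tot}P}\}$ define: $\mathsf{SPP}$ (resp. $\mathsf{SP_{tot}P}$): languages $L$ with some $f\in\mathsf{GapP}$ (resp. $\mathsf{Gap_{tot}P}$) such that $f(x)=1$ if $x\in L$ and $f(x)=0$ if $x\notin L$. $\mathsf{WPP}$ (resp. $\mathsf{WP_{tot}P}$): languages $L$ with some $f\in\mathsf{GapP}$ (resp. $\mathsf{Gap_{tot}P}$) and some $g\in\mathsf{FP}$ with $0\notin\mathrm{range}(g)$ such that $f(x)=g(x)$ if $x\in L$ and $f(x)=0$ if $x\notin L$. $\mathsf{C_=P}$ (resp. $\mathsf{{C_=}_{tot}P}$): languages $L$ with some $f\in\mathsf{GapP}$ (resp. $\mathsf{Gap_{tot}P}$)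 such that $x\in L\iff f(x)=0$. $\mathsf{PP}$ (resp. $\mathsf{P_{tot}P}$): languages $L$ with some $f\in\mathsf{GapP}$ (resp. $\mathsf{Gap_{tot}P}$) such that $x\in L\iff f(x)>0$. *)

theory Defs
  imports Main
begin

text \<open>Tape symbols are natural numbers below
  nsyms M, with 0 the blank, 1 encoding the input bit 0 (False) and 2 the input bit 1 (True). The transition relation maps a state and
  a scanned symbol to a set of (new state, written symbol, head move) triples; a configuration
  with no applicable transition is halting, and it is accepting iff its state is accepting.\<close>

record ntm =
  nstates :: nat
  nsyms :: nat
  start :: nat
  accepting :: "nat set"
  trans :: "nat \<Rightarrow> nat \<Rightarrow> (nat \<times> nat \<times> int) set"

definition wf_ntm :: "ntm \<Rightarrow> bool" where
  "wf_ntm M \<longleftrightarrow> 3 \<le> nsyms M \<and> start M < nstates M \<and> accepting M \<subseteq> {..<nstates M}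
     \<and> (\<forall>q a. trans M q a \<subseteq> {..<nstates M} \<times> {..<nsyms M} \<times> {-1, 0, 1})
     \<and> (\<forall>q a. (nstates M \<le> q \<or> nsyms M \<le> a) \<longrightarrow> trans M q a = {})"

type_synonym config = "nat \<times> (int \<Rightarrow> nat) \<times> int"

definition init_conf :: "ntm \<Rightarrow> bool list \<Rightarrow> config" where
  "init_conf M x = (start M,
     (\<lambda>i. if 0 \<le> i \<and> i < int (length x) then (if x ! nat i then 2 else 1) else 0), 0)"

definition succs :: "ntm \<Rightarrow> config \<Rightarrow> config set" where
  "succs M c = (case c of (q, tp, h) \<Rightarrow>
     (\<lambda>(q', b, d). (q', tp(h := b), h + d)) ` trans M q (tp h))"

fun halts_within :: "ntm \<Rightarrow> nat \<Rightarrow> config \<Rightarrow> bool" where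
  "halts_within M 0 c = (succs M c = {})"
| "halts_within M (Suc t) c = (\<forall>c'\<in>succs M c. halts_within M t c')"

fun leaves :: "ntm \<Rightarrow> (config \<Rightarrow> bool) \<Rightarrow> nat \<Rightarrow> config \<Rightarrow> nat" where
  "leaves M P 0 c = (if succs M c = {} \<and> P c then 1 else 0)"
| "leaves M P (Suc t) c = (if succs M c = {} then (if P c then 1 else 0)
                           else (\<Sum>c'\<in>succs M c. leaves M P t c'))"

definition run_time :: "ntm \<Rightarrow> bool list \<Rightarrow> nat" where
  "run_time M x = (LEAST t. halts_within M t (init_conf M x))"

definition acc :: "ntm \<Rightarrow> bool list \<Rightarrow> nat" where
  "acc M x = leaves M (\<lambda>(q, _, _). q \<in> accepting M) (run_time M x) (init_conf M x)"

definition rej :: "ntm \<Rightarrow> bool list \<Rightarrow> nat" where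
  "rej M x = leaves M (\<lambda>(q, _, _). q \<notin> accepting M) (run_time M x) (init_conf M x)"

text \<open>tot_M(x): number of computation paths minus one.\<close>
definition tot :: "ntm \<Rightarrow> bool list \<Rightarrow> nat" where
  "tot M x = acc M x + rej M x - 1"

definition poly_bounded :: "(nat \<Rightarrow> nat) \<Rightarrow> bool" where
  "poly_bounded T \<longleftrightarrow> (\<exists>k. \<forall>n. T n \<le> n ^ k + k)"

definition is_nptm :: "ntm \<Rightarrow> bool" where
  "is_nptm M \<longleftrightarrow> wf_ntm M \<and>
     (\<exists>T. poly_bounded T \<and> (\<forall>x. halts_within M (T (length x)) (init_conf M x)))"

definition deterministic :: "ntm \<Rightarrow> bool" where
  "deterministic M \<longleftrightarrow> (\<forall>q a t1 t2. t1 \<in> trans M q a \<longrightarrow> t2 \<in> trans M q a \<longrightarrow> t1 = t2)"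

definition dstep :: "ntm \<Rightarrow> config \<Rightarrow> config" where
  "dstep M c = (if succs M c = {} then c else the_elem (succs M c))"

definition final_conf :: "ntm \<Rightarrow> bool list \<Rightarrow> config" where
  "final_conf M x = (dstep M ^^ run_time M x) (init_conf M x)"

definition output_bits :: "config \<Rightarrow> bool list" where
  "output_bits c = (case c of (q, tp, h) \<Rightarrow>
     map (\<lambda>i. tp (h + int i) = 2) [0..<(LEAST L. tp (h + int L) \<notin> {1, 2})])"

definition nat_of_bits :: "bool list \<Rightarrow> nat" where
  "nat_of_bits bs = foldl (\<lambda>n b. 2 * n + (if b then 1 else 0)) 0 bs"

definition FP :: "(bool list \<Rightarrow> nat) set" where
  "FP = {f. \<exists>M. is_nptm M \<and> deterministic M \<and>
             (\<forall>x. f x = nat_of_bits (output_bits (final_conf M x)))}"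

definition GapP :: "(bool list \<Rightarrow> int) set" where
  "GapP = {(\<lambda>x. int (acc M x) - int (rej M x)) | M. is_nptm M}"

definition TotP :: "(bool list \<Rightarrow> nat) set" where
  "TotP = {tot M | M. is_nptm M}"

definition GapTotP :: "(bool list \<Rightarrow> int) set" where
  "GapTotP = {(\<lambda>x. int (g x) - int (h x)) | g h. g \<in> TotP \<and> h \<in> TotP}"

type_synonym lang = "bool list set"

definition SP_of :: "(bool list \<Rightarrow> int) set \<Rightarrow> lang set" where
  "SP_of F = {L. \<exists>f\<in>F. \<forall>x. (x \<in> L \<longrightarrow> f x = 1) \<and> (x \<notin> L \<longrightarrow> f x = 0)}"

definition WP_of :: "(bool list \<Rightarrow> int) set \<Rightarrow> lang set" where
  "WP_of F = {L. \<exists>f\<in>F. \<exists>g\<in>FP. 0 \<notin> range g \<and>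
                  (\<forall>x. (x \<in> L \<longrightarrow> f x = int (g x)) \<and> (x \<notin> L \<longrightarrow> f x = 0))}"

definition CEq_of :: "(bool list \<Rightarrow> int) set \<Rightarrow> lang set" where
  "CEq_of F = {L. \<exists>f\<in>F. \<forall>x. x \<in> L \<longleftrightarrow> f x = 0}"

definition P_of :: "(bool list \<Rightarrow> int) set \<Rightarrow> lang set" where
  "P_of F = {L. \<exists>f\<in>F. \<forall>x. x \<in> L \<longleftrightarrow> f x > 0}"

definition SPP where "SPP = SP_of GapP"
definition SPtotP where "SPtotP = SP_of GapTotP"
definition WPP where "WPP = WP_of GapP"
definition WPtotP where "WPtotP = WP_of GapTotP"
definition CeqP where "CeqP = CEq_of GapP"
definition CeqtotP where "CeqtotP = CEq_of GapTotP"
definition PP where "PP = P_of GapP"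
definition PtotP where "PtotP = P_of GapTotP"

end

theory Submission
  imports Defs
begin

text \<open>Fork every halting path of M that ends in an accepting state into two further halting
  paths: the resulting machine has acc + rej + acc paths. Doing the same with the rejecting
  states gives acc + rej + rej paths, so the difference of the two TotP functions is the gap
  acc - rej of M. Conversely, tot_M1 - tot_M2 is the gap of the machine that nondeterministically
  either runs M1 and accepts on every path, or runs M2 and rejects on every path. Hence
  GapTotP = GapP, and the four pairs of classes, defined by the same conditions over these two
  function classes, coincide.\<close>

lemma leaves_halted: "succs M c = {} \<Longrightarrow> leaves M P t c = (if P c then 1 else 0)"
  by (cases t) auto

lemma halts_within_halted: "succs M c = {} \<Longrightarrow> halts_within M t c"
  by (cases t) auto

lemma leaves_False: "leaves M (\<lambda>_. False) t c = 0"
  by (induction t arbitrary: c) auto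

lemma leaves_True_eq_add: "leaves M (\<lambda>_. True) t c = leaves M P t c + leaves M (\<lambda>c. \<not> P c) t c"
  by (induction t arbitrary: c) (auto simp: sum.distrib)

lemma halts_within_mono: "halts_within M t c \<Longrightarrow> t \<le> t' \<Longrightarrow> halts_within M t' c"
proof (induction t arbitrary: c t')
  case 0
  then show ?case by (simp add: halts_within_halted)
next
  case (Suc t)
  then obtain t'' where "t' = Suc t''" "t \<le> t''" by (cases t') auto
  then show ?case using Suc by auto
qed

lemma leaves_eq_if_halts_within:
  "halts_within M t c \<Longrightarrow> t \<le> t' \<Longrightarrow> leaves M P t' c = leaves M P t c"
proof (induction t arbitrary: c t')
  case 0
  then show ?case by (simp add: leaves_halted)
next
  case (Suc t)
  then obtain t'' where t': "t' = Suc t''" "t \<le> t''" by (cases t') auto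
  show ?case
  proof (cases "succs M c = {}")
    case False
    have "leaves M P t'' c' = leaves M P t c'" if "c' \<in> succs M c" for c'
      using Suc.prems(1) that t'(2) by (intro Suc.IH) auto
    then show ?thesis using False t'(1) by (simp cong: sum.cong)
  qed (simp add: leaves_halted)
qed

lemma finite_succs: "wf_ntm M \<Longrightarrow> finite (succs M c)"
proof -
  assume "wf_ntm M"
  then have "trans M q a \<subseteq> {..<nstates M} \<times> {..<nsyms M} \<times> {-1, 0, 1}" for q a
    unfolding wf_ntm_def by blast
  then have "finite (trans M q a)" for q a
    by (rule finite_subset) auto
  then show ?thesis by (cases c) (simp add: succs_def)
qed

lemma leaves_True_pos: "wf_ntm M \<Longrightarrow> halts_within M t c \<Longrightarrow> 0 < leaves M (\<lambda>_. True) t c"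
proof (induction t arbitrary: c)
  case (Suc t)
  show ?case
  proof (cases "succs M c = {}")
    case False
    then obtain c' where c': "c' \<in> succs M c" by blast
    then have "0 < leaves M (\<lambda>_. True) t c'"
      using Suc by simp
    also have "\<dots> \<le> (\<Sum>c''\<in>succs M c. leaves M (\<lambda>_. True) t c'')"
      by (rule member_le_sum[OF c']) (simp_all add: finite_succs[OF \<open>wf_ntm M\<close>])
    finally show ?thesis using False by simp
  qed simp
qed simp

lemma halts_within_run_time:
  "halts_within M t (init_conf M x) \<Longrightarrow> halts_within M (run_time M x) (init_conf M x)"
  unfolding run_time_def by (rule LeastI)

lemma leaves_run_time:
  "halts_within M t (init_conf M x) \<Longrightarrow>
    leaves M P (run_time M x) (init_conf M x) = leaves M P t (init_conf M x)"
proof -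
  assume halts: "halts_within M t (init_conf M x)"
  then have "run_time M x \<le> t"
    unfolding run_time_def by (rule Least_le)
  with halts_within_run_time[OF halts] show ?thesis
    by (rule leaves_eq_if_halts_within[symmetric])
qed

lemma acc_add_rej: "acc M x + rej M x = leaves M (\<lambda>_. True) (run_time M x) (init_conf M x)"
  unfolding acc_def rej_def
  by (subst leaves_True_eq_add[where P = "\<lambda>(q, _, _). q \<in> accepting M"]) (simp add: case_prod_unfold)

lemma is_nptm_halts_within_run_time:
  "is_nptm M \<Longrightarrow> halts_within M (run_time M x) (init_conf M x)"
  unfolding is_nptm_def by (blast intro: halts_within_run_time)

lemma int_tot: "is_nptm M \<Longrightarrow> int (tot M x) = int (acc M x) + int (rej M x) - 1"
proof -
  assume M: "is_nptm M"
  then have "wf_ntm M" unfolding is_nptm_def by blast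
  then have "0 < acc M x + rej M x"
    unfolding acc_add_rej using is_nptm_halts_within_run_time[OF M] by (rule leaves_True_pos)
  then show ?thesis unfolding tot_def by linarith
qed

lemma poly_bounded_Suc_max:
  assumes "poly_bounded T1" "poly_bounded T2"
  shows "poly_bounded (\<lambda>n. Suc (max (T1 n) (T2 n)))"
proof -
  obtain k1 k2 where k1: "\<And>n. T1 n \<le> n ^ k1 + k1" and k2: "\<And>n. T2 n \<le> n ^ k2 + k2"
    using assms unfolding poly_bounded_def by blast
  define k where "k = max k1 k2 + 2"
  have "T1 n < n ^ k + k \<and> T2 n < n ^ k + k" for n
  proof (cases "n = 0")
    case False
    then have "n ^ k1 \<le> n ^ k" "n ^ k2 \<le> n ^ k"
      unfolding k_def by (intro power_increasing; simp)+
    then show ?thesis using k1[of n] k2[of n] unfolding k_def by linarith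
  qed (use k1[of 0] k2[of 0] in \<open>auto simp: k_def power_0_left split: if_splits\<close>)
  then have "Suc (max (T1 n) (T2 n)) \<le> n ^ k + k" for n
    by (simp add: Suc_le_eq)
  then show ?thesis unfolding poly_bounded_def by blast
qed

definition conf_wf :: "ntm \<Rightarrow> config \<Rightarrow> bool" where
  "conf_wf M c \<longleftrightarrow> (case c of (q, tp, _) \<Rightarrow> q < nstates M \<and> (\<forall>i. tp i < nsyms M))"

lemma conf_wf_init_conf: "wf_ntm M \<Longrightarrow> conf_wf M (init_conf M x)"
  unfolding conf_wf_def init_conf_def wf_ntm_def by auto

lemma conf_wf_succs: "wf_ntm M \<Longrightarrow> conf_wf M c \<Longrightarrow> c' \<in> succs M c \<Longrightarrow> conf_wf M c'"
  unfolding wf_ntm_def conf_wf_def succs_def by (cases c) fastforce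

lemma leaves_simulation:
  assumes "inj f"
    and succs_f: "\<And>c. I c \<Longrightarrow> succs M' (f c) = f ` succs M c"
    and I_succs: "\<And>c c'. I c \<Longrightarrow> c' \<in> succs M c \<Longrightarrow> I c'"
    and P_f: "\<And>c. I c \<Longrightarrow> P (f c) = Q c"
  shows "I c \<Longrightarrow> leaves M' P t (f c) = leaves M Q t c"
proof (induction t arbitrary: c)
  case (Suc t)
  have "sum (leaves M' P t) (f ` succs M c) = sum (leaves M Q t) (succs M c)"
    using Suc I_succs by (simp add: sum.reindex inj_on_subset[OF \<open>inj f\<close>])
  then show ?case using Suc.prems succs_f P_f by simp
qed (simp add: succs_f P_f)

lemma halts_within_simulation:
  assumes succs_f: "\<And>c. I c \<Longrightarrow> succs M' (f c) = f ` succs M c"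
    and I_succs: "\<And>c c'. I c \<Longrightarrow> c' \<in> succs M c \<Longrightarrow> I c'"
  shows "I c \<Longrightarrow> halts_within M' t (f c) = halts_within M t c"
  by (induction t arbitrary: c) (use succs_f I_succs in auto)

text \<open>The two fresh states are distinct because successor configurations form a set.\<close>

definition fork_halting :: "ntm \<Rightarrow> nat set \<Rightarrow> ntm" where
  "fork_halting M S = M\<lparr>nstates := nstates M + 2,
     trans := (\<lambda>q a. if q \<in> S \<and> q < nstates M \<and> a < nsyms M \<and> trans M q a = {}
       then {(nstates M, a, 0), (Suc (nstates M), a, 0)} else trans M q a)\<rparr>"

lemma wf_fork_halting: "wf_ntm M \<Longrightarrow> wf_ntm (fork_halting M S)"
  unfolding wf_ntm_def fork_halting_def by (auto 4 4)

lemma init_conf_fork_halting: "init_conf (fork_halting M S) x = init_conf M x"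
  unfolding init_conf_def fork_halting_def by simp

lemma succs_fork_halting:
  "conf_wf M (q, tp, h) \<Longrightarrow> succs (fork_halting M S) (q, tp, h) =
    (if q \<in> S \<and> succs M (q, tp, h) = {} then {(nstates M, tp, h), (Suc (nstates M), tp, h)}
     else succs M (q, tp, h))"
  unfolding succs_def fork_halting_def conf_wf_def by auto

lemma succs_fork_halting_fresh:
  "wf_ntm M \<Longrightarrow> nstates M \<le> q \<Longrightarrow> succs (fork_halting M S) (q, tp, h) = {}"
  unfolding succs_def fork_halting_def wf_ntm_def by auto

lemma fork_halting_at_halted:
  assumes "wf_ntm M" "conf_wf M c" "succs M c = {}"
  shows "leaves (fork_halting M S) (\<lambda>_. True) (Suc t) c
      = leaves M (\<lambda>_. True) t c + leaves M (\<lambda>(q, _, _). q \<in> S) t c"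
    and "halts_within (fork_halting M S) (Suc t) c"
  using assms succs_fork_halting[of M] succs_fork_halting_fresh[OF assms(1)]
  by (cases c; auto simp: leaves_halted halts_within_halted)+

lemma leaves_halts_within_fork_halting:
  assumes "wf_ntm M"
  shows "halts_within M t c \<Longrightarrow> conf_wf M c \<Longrightarrow>
      leaves (fork_halting M S) (\<lambda>_. True) (Suc t) c
        = leaves M (\<lambda>_. True) t c + leaves M (\<lambda>(q, _, _). q \<in> S) t c
    \<and> halts_within (fork_halting M S) (Suc t) c"
proof (induction t arbitrary: c)
  case 0
  then have "succs M c = {}" by simp
  then show ?case using fork_halting_at_halted[OF assms 0(2)] by blast
next
  case (Suc t)
  show ?case
  proof (cases "succs M c = {}")
    case True
    then show ?thesis using fork_halting_at_halted[OF assms Suc.prems(2)] by blast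
  next
    case False
    then show ?thesis
      using Suc succs_fork_halting[of M] conf_wf_succs[OF assms]
      by (cases c) (auto simp: sum.distrib cong: sum.cong)
  qed
qed

lemma is_nptm_fork_halting: "is_nptm M \<Longrightarrow> is_nptm (fork_halting M S)"
proof -
  assume "is_nptm M"
  then obtain T where wf: "wf_ntm M" and T: "poly_bounded T"
    and halts: "\<And>x. halts_within M (T (length x)) (init_conf M x)"
    unfolding is_nptm_def by blast
  have "poly_bounded (\<lambda>n. Suc (T n))"
    using poly_bounded_Suc_max[OF T T] by simp
  moreover have "halts_within (fork_halting M S) (Suc (T (length x))) (init_conf (fork_halting M S) x)" for x
    using leaves_halts_within_fork_halting[OF wf halts conf_wf_init_conf[OF wf]]
    by (simp add: init_conf_fork_halting)
  ultimately show ?thesis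
    unfolding is_nptm_def using wf_fork_halting[OF wf] by blast
qed

lemma acc_add_rej_fork_halting:
  assumes "is_nptm M"
  shows "acc (fork_halting M S) x + rej (fork_halting M S) x
    = acc M x + rej M x + leaves M (\<lambda>(q, _, _). q \<in> S) (run_time M x) (init_conf M x)"
proof -
  let ?t = "run_time M x"
  have wf: "wf_ntm M" using assms unfolding is_nptm_def by blast
  have halts: "halts_within M ?t (init_conf M x)"
    using is_nptm_halts_within_run_time[OF assms] .
  note fork = leaves_halts_within_fork_halting[OF wf halts conf_wf_init_conf[OF wf], of S]
  then have "halts_within (fork_halting M S) (Suc ?t) (init_conf (fork_halting M S) x)"
    by (simp add: init_conf_fork_halting)
  then have "acc (fork_halting M S) x + rej (fork_halting M S) x
      = leaves (fork_halting M S) (\<lambda>_. True) (Suc ?t) (init_conf (fork_halting M S) x)"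
    unfolding acc_add_rej by (rule leaves_run_time)
  then show ?thesis using fork by (simp add: acc_add_rej init_conf_fork_halting)
qed

lemma GapP_subset_GapTotP: "GapP \<subseteq> GapTotP"
proof
  fix f assume "f \<in> GapP"
  then obtain M where M: "is_nptm M" and f: "f = (\<lambda>x. int (acc M x) - int (rej M x))"
    unfolding GapP_def by blast
  let ?A = "fork_halting M (accepting M)" and ?R = "fork_halting M (- accepting M)"
  have "int (tot ?A x) = int (acc M x) + int (rej M x) + int (acc M x) - 1" for x
    using int_tot[OF is_nptm_fork_halting[OF M]] acc_add_rej_fork_halting[OF M, of "accepting M" x]
    unfolding acc_def[of M x, symmetric] by simp
  moreover have "int (tot ?R x) = int (acc M x) + int (rej M x) + int (rej M x) - 1" for x
  proof -
    have "leaves M (\<lambda>(q, _, _). q \<in> - accepting M) (run_time M x) (init_conf M x) = rej M x"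
      by (simp add: rej_def)
    then show ?thesis
      using int_tot[OF is_nptm_fork_halting[OF M]] acc_add_rej_fork_halting[OF M, of "- accepting M" x]
      by simp
  qed
  ultimately have "f = (\<lambda>x. int (tot ?A x) - int (tot ?R x))"
    using f by auto
  then show "f \<in> GapTotP"
    unfolding GapTotP_def TotP_def using is_nptm_fork_halting[OF M] by blast
qed

definition choose_ntm :: "ntm \<Rightarrow> ntm \<Rightarrow> ntm" where
  "choose_ntm M1 M2 = \<lparr>nstates = Suc (nstates M1 + nstates M2),
     nsyms = max (nsyms M1) (nsyms M2), start = 0, accepting = {1..nstates M1},
     trans = (\<lambda>q a.
       if q = 0 then
         (if a < max (nsyms M1) (nsyms M2)
          then {(Suc (start M1), a, 0), (Suc (nstates M1 + start M2), a, 0)} else {})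
       else if q \<le> nstates M1 then apfst ((+) 1) ` trans M1 (q - 1) a
       else apfst ((+) (Suc (nstates M1))) ` trans M2 (q - Suc (nstates M1)) a)\<rparr>"

lemma wf_choose_ntm:
  assumes "wf_ntm M1" "wf_ntm M2"
  shows "wf_ntm (choose_ntm M1 M2)"
proof -
  let ?C = "choose_ntm M1 M2"
  have T1: "trans M1 q a \<subseteq> {..<nstates M1} \<times> {..<nsyms M1} \<times> {-1, 0, 1}"
    and T2: "trans M2 q a \<subseteq> {..<nstates M2} \<times> {..<nsyms M2} \<times> {-1, 0, 1}"
    and E1: "nstates M1 \<le> q \<or> nsyms M1 \<le> a \<Longrightarrow> trans M1 q a = {}"
    and E2: "nstates M2 \<le> q \<or> nsyms M2 \<le> a \<Longrightarrow> trans M2 q a = {}" for q a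
    using assms unfolding wf_ntm_def by blast+
  have starts: "start M1 < nstates M1" "start M2 < nstates M2"
    using assms unfolding wf_ntm_def by blast+
  have "3 \<le> nsyms ?C" "start ?C < nstates ?C" "accepting ?C \<subseteq> {..<nstates ?C}"
    using assms by (auto simp: choose_ntm_def wf_ntm_def)
  moreover have "trans ?C q a \<subseteq> {..<nstates ?C} \<times> {..<nsyms ?C} \<times> {-1, 0, 1}" for q a
    using T1[of "q - 1" a] T2[of "q - Suc (nstates M1)" a] starts
    by (auto simp: choose_ntm_def)
  moreover have "trans ?C q a = {}" if out: "nstates ?C \<le> q \<or> nsyms ?C \<le> a" for q a
  proof -
    consider "q = 0" | "0 < q" "q \<le> nstates M1" | "nstates M1 < q" by linarith
    then show ?thesis
    proof cases
      case 1
      then show ?thesis using out by (auto simp: choose_ntm_def max_def)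
    next
      case 2
      then have "nsyms M1 \<le> a" using out by (auto simp: choose_ntm_def)
      then show ?thesis using 2 E1 by (simp add: choose_ntm_def)
    next
      case 3
      then have "nstates M2 \<le> q - Suc (nstates M1) \<or> nsyms M2 \<le> a"
        using out by (auto simp: choose_ntm_def)
      then show ?thesis using 3 E2 by (simp add: choose_ntm_def)
    qed
  qed
  ultimately show ?thesis
    unfolding wf_ntm_def by blast
qed

lemma succs_choose_ntm_left:
  "conf_wf M1 c \<Longrightarrow> succs (choose_ntm M1 M2) (apfst ((+) 1) c) = apfst ((+) 1) ` succs M1 c"
  unfolding succs_def choose_ntm_def conf_wf_def by (auto simp: image_image case_prod_unfold)

lemma succs_choose_ntm_right:
  "succs (choose_ntm M1 M2) (apfst ((+) (Suc (nstates M1))) c)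
    = apfst ((+) (Suc (nstates M1))) ` succs M2 c"
  unfolding succs_def choose_ntm_def by (auto simp: image_image case_prod_unfold)

lemma succs_choose_ntm_init:
  "wf_ntm M1 \<Longrightarrow> succs (choose_ntm M1 M2) (init_conf (choose_ntm M1 M2) x)
    = {apfst ((+) 1) (init_conf M1 x), apfst ((+) (Suc (nstates M1))) (init_conf M2 x)}"
  unfolding succs_def choose_ntm_def init_conf_def wf_ntm_def by auto

lemma choose_ntm_branches_distinct:
  "wf_ntm M1 \<Longrightarrow> apfst ((+) 1) (init_conf M1 x) \<noteq> apfst ((+) (Suc (nstates M1))) (init_conf M2 x)"
  unfolding wf_ntm_def init_conf_def by auto

lemma leaves_choose_ntm_init:
  assumes wf1: "wf_ntm M1" and wf2: "wf_ntm M2"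
    and P1: "\<And>c. conf_wf M1 c \<Longrightarrow> P (apfst ((+) 1) c) = Q1 c"
    and P2: "\<And>c. conf_wf M2 c \<Longrightarrow> P (apfst ((+) (Suc (nstates M1))) c) = Q2 c"
  shows "leaves (choose_ntm M1 M2) P (Suc t) (init_conf (choose_ntm M1 M2) x)
      = leaves M1 Q1 t (init_conf M1 x) + leaves M2 Q2 t (init_conf M2 x)"
proof -
  let ?C = "choose_ntm M1 M2" and ?f1 = "apfst ((+) 1)" and ?f2 = "apfst ((+) (Suc (nstates M1)))"
  have "leaves ?C P t (?f1 (init_conf M1 x)) = leaves M1 Q1 t (init_conf M1 x)"
    by (rule leaves_simulation[where f = ?f1 and I = "conf_wf M1" and P = P and Q = Q1,
          OF _ succs_choose_ntm_left conf_wf_succs[OF wf1] P1 conf_wf_init_conf[OF wf1]]) simp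
  moreover have "leaves ?C P t (?f2 (init_conf M2 x)) = leaves M2 Q2 t (init_conf M2 x)"
    by (rule leaves_simulation[where f = ?f2 and I = "conf_wf M2" and P = P and Q = Q2,
          OF _ succs_choose_ntm_right conf_wf_succs[OF wf2] P2 conf_wf_init_conf[OF wf2]]) simp
  ultimately show ?thesis
    using choose_ntm_branches_distinct[OF wf1] by (simp add: succs_choose_ntm_init[OF wf1])
qed

lemma halts_within_choose_ntm_init:
  assumes wf1: "wf_ntm M1" and wf2: "wf_ntm M2"
  shows "halts_within (choose_ntm M1 M2) (Suc t) (init_conf (choose_ntm M1 M2) x)
    \<longleftrightarrow> halts_within M1 t (init_conf M1 x) \<and> halts_within M2 t (init_conf M2 x)"
proof -
  let ?C = "choose_ntm M1 M2" and ?f1 = "apfst ((+) 1)" and ?f2 = "apfst ((+) (Suc (nstates M1)))"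
  have "halts_within ?C t (?f1 (init_conf M1 x)) = halts_within M1 t (init_conf M1 x)"
    by (rule halts_within_simulation[where f = ?f1 and I = "conf_wf M1",
          OF succs_choose_ntm_left conf_wf_succs[OF wf1] conf_wf_init_conf[OF wf1]])
  moreover have "halts_within ?C t (?f2 (init_conf M2 x)) = halts_within M2 t (init_conf M2 x)"
    by (rule halts_within_simulation[where f = ?f2 and I = "conf_wf M2",
          OF succs_choose_ntm_right conf_wf_succs[OF wf2] conf_wf_init_conf[OF wf2]])
  ultimately show ?thesis by (simp add: succs_choose_ntm_init[OF wf1])
qed

lemma is_nptm_choose_ntm:
  assumes "is_nptm M1" "is_nptm M2"
  shows "is_nptm (choose_ntm M1 M2)"
proof -
  obtain T1 T2 where wf: "wf_ntm M1" "wf_ntm M2" and T: "poly_bounded T1" "poly_bounded T2"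
    and halts1: "\<And>x. halts_within M1 (T1 (length x)) (init_conf M1 x)"
    and halts2: "\<And>x. halts_within M2 (T2 (length x)) (init_conf M2 x)"
    using assms unfolding is_nptm_def by blast
  have "halts_within (choose_ntm M1 M2) (Suc (max (T1 (length x)) (T2 (length x))))
      (init_conf (choose_ntm M1 M2) x)" for x
    unfolding halts_within_choose_ntm_init[OF wf]
    using halts_within_mono[OF halts1] halts_within_mono[OF halts2] by simp
  then show ?thesis
    unfolding is_nptm_def using wf_choose_ntm[OF wf] poly_bounded_Suc_max[OF T] by blast
qed

lemma acc_rej_choose_ntm:
  assumes M1: "is_nptm M1" and M2: "is_nptm M2"
  shows "acc (choose_ntm M1 M2) x = acc M1 x + rej M1 x"
    and "rej (choose_ntm M1 M2) x = acc M2 x + rej M2 x"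
proof -
  let ?C = "choose_ntm M1 M2" and ?t = "max (run_time M1 x) (run_time M2 x)"
  have wf: "wf_ntm M1" "wf_ntm M2" using M1 M2 unfolding is_nptm_def by blast+
  have halts1: "halts_within M1 ?t (init_conf M1 x)"
    by (rule halts_within_mono[OF is_nptm_halts_within_run_time[OF M1]]) simp
  have halts2: "halts_within M2 ?t (init_conf M2 x)"
    by (rule halts_within_mono[OF is_nptm_halts_within_run_time[OF M2]]) simp
  have halts: "halts_within ?C (Suc ?t) (init_conf ?C x)"
    using halts1 halts2 halts_within_choose_ntm_init[OF wf] by blast
  have "acc ?C x = leaves ?C (\<lambda>(q, _, _). q \<in> accepting ?C) (Suc ?t) (init_conf ?C x)"
    unfolding acc_def by (rule leaves_run_time[OF halts])
  also have "\<dots> = leaves M1 (\<lambda>_. True) ?t (init_conf M1 x) + leaves M2 (\<lambda>_. False) ?t (init_conf M2 x)"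
    by (rule leaves_choose_ntm_init[OF wf]) (auto simp: conf_wf_def choose_ntm_def)
  finally show "acc ?C x = acc M1 x + rej M1 x"
    by (simp add: acc_add_rej leaves_run_time[OF halts1] leaves_False)
  have "rej ?C x = leaves ?C (\<lambda>(q, _, _). q \<notin> accepting ?C) (Suc ?t) (init_conf ?C x)"
    unfolding rej_def by (rule leaves_run_time[OF halts])
  also have "\<dots> = leaves M1 (\<lambda>_. False) ?t (init_conf M1 x) + leaves M2 (\<lambda>_. True) ?t (init_conf M2 x)"
    by (rule leaves_choose_ntm_init[OF wf]) (auto simp: conf_wf_def choose_ntm_def)
  finally show "rej ?C x = acc M2 x + rej M2 x"
    by (simp add: acc_add_rej leaves_run_time[OF halts2] leaves_False)
qed

lemma GapTotP_subset_GapP: "GapTotP \<subseteq> GapP"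
proof
  fix f assume "f \<in> GapTotP"
  then obtain M1 M2 where M: "is_nptm M1" "is_nptm M2"
    and f: "f = (\<lambda>x. int (tot M1 x) - int (tot M2 x))"
    unfolding GapTotP_def TotP_def by blast
  have "f = (\<lambda>x. int (acc (choose_ntm M1 M2) x) - int (rej (choose_ntm M1 M2) x))"
    using f int_tot[OF M(1)] int_tot[OF M(2)] acc_rej_choose_ntm[OF M] by auto
  then show "f \<in> GapP"
    unfolding GapP_def using is_nptm_choose_ntm[OF M] by blast
qed

theorem corollary2:
  shows "SPtotP = SPP \<and> WPtotP = WPP \<and> CeqtotP = CeqP \<and> PtotP = PP"
proof -
  have "GapTotP = GapP"
    by (rule antisym[OF GapTotP_subset_GapP GapP_subset_GapTotP])
  then show ?thesis
    unfolding SPtotP_def SPP_def WPtotP_def WPP_def CeqtotP_def CeqP_def PtotP_def PP_def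
    by simp
qed

end
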